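(* Let $G$ be a serial superedge with terminals $s=s_1,s_2,\dots,s_{k+1}=t$, i.e. an oriented serial superedge $(G,s,t)$ with principal subgraphs $(G_i,s_i,s_{i+1})$ for $1\le i\le k$, each $G_i$ non-serial. Suppose that for every $1\le i\le k$ there is a graph isomorphism $r_i:G_i\to G_{k-i+1}$ with $r_i(s_i)=s_{k-i+2}$ and $r_i(s_{i+1})=s_{k-i+1}$, and let $r:V(G)\to V(G)$ be the map whose restriction to $V(G_i)$ is $r_i$ for each $i$. Then $\mathrm{Aut}_{\mathrm{semi}}(G,\{s,t\})=\{\sigma,\ r\sigma:\sigma\in\mathrm{Aut}_{\mathrm{or}}(G,s,t)\}$. If no such family of isomorphisms $r_1,\dots,r_k$ exists, then $\mathrm{Aut}_{\mathrm{semi}}(G,\{s,t\})=\mathrm{Aut}_{\mathrm{or}}(G,s,t)$.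
   Context: All graphs are finite, simple and undirected. An oriented series-parallel graph is a triple $(G,s,t)$ where $G$ is a graph and $s\neq t$ are vertices, defined recursively: (i) $G$ is a single edge with vertex set $\{s,t\}$; or (ii) (serial superedge) there are $k\ge 2$ oriented series-parallel graphs $(G_1,s_1,t_1),\dots,(G_k,s_k,t_k)$ with $s_1=s$, $t_k=t$, $t_i=s_{i+1}$ for $1\le i<k$, $V(G_i)\cap V(G_{i+1})=\{s_{i+1}\}$, $V(G_i)\cap V(G_j)=\emptyset$ for $|i-j|\ge2$, and $G=G_1\cup\dots\cup G_k$; or (iii) (parallel superedge) there are $k\ge2$ oriented series-parallel graphs $(G_1,s,t),\dots,(G_k,s,t)$ with $V(G_i)\cap V(G_j)=\{s,t\}$ for $i\neq j$ and $G=G_1\cup\dots\cup G_k$. The $G_i$ are the principal subgraphs; a graph is non-serial if it is not a serial superedge. $\mathrm{Aut}_{\mathrm{or}}(G,s,t)$ is the group of automorphisms $\sigma$ of $G$ with $\sigma(s)=s$, $\sigma(t)=t$; $\mathrm{Aut}_{\mathrm{semi}}(G,\{s,t\})$ is the group of automorphisms $\sigma$ of $G$ with $\{\sigma(s),\sigma(t)\}=\{s,t\}$. *)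

theory Defs
  imports Main
begin

text \<open>A graph is a pair of a vertex set V and an edge set E of 2-element subsets.
  Oriented series-parallel graphs (V, E, s, t) are defined inductively; principal
  subgraphs are given as lists of vertex sets, edge sets, and (for serial
  superedges) the list of terminals s_1, ..., s_{k+1}.\<close>

inductive osp :: "'a set \<Rightarrow> 'a set set \<Rightarrow> 'a \<Rightarrow> 'a \<Rightarrow> bool" where
  edge: "s \<noteq> t \<Longrightarrow> osp {s, t} {{s, t}} s t"
| serial: "\<lbrakk> s \<noteq> t; length Vs \<ge> 2; length Es = length Vs; length ss = length Vs + 1;
            ss ! 0 = s; ss ! length Vs = t;
            \<forall>i < length Vs. osp (Vs ! i) (Es ! i) (ss ! i) (ss ! Suc i);
            \<forall>i. Suc i < length Vs \<longrightarrow> Vs ! i \<inter> Vs ! Suc i = {ss ! Suc i};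
            \<forall>i j. i < length Vs \<longrightarrow> j < length Vs \<longrightarrow> i + 2 \<le> j \<longrightarrow> Vs ! i \<inter> Vs ! j = {};
            V = (\<Union>i < length Vs. Vs ! i); E = (\<Union>i < length Vs. Es ! i) \<rbrakk>
           \<Longrightarrow> osp V E s t"
| parallel: "\<lbrakk> s \<noteq> t; length Vs \<ge> 2; length Es = length Vs;
              \<forall>i < length Vs. osp (Vs ! i) (Es ! i) s t;
              \<forall>i j. i < length Vs \<longrightarrow> j < length Vs \<longrightarrow> i \<noteq> j \<longrightarrow> Vs ! i \<inter> Vs ! j = {s, t};
              V = (\<Union>i < length Vs. Vs ! i); E = (\<Union>i < length Vs. Es ! i) \<rbrakk>
           \<Longrightarrow> osp V E s t"

definition serial_decomp :: "'a set \<Rightarrow> 'a set set \<Rightarrow> 'a \<Rightarrow> 'a \<Rightarrow> 'a set list \<Rightarrow> 'a set set list \<Rightarrow> 'a list \<Rightarrow> bool" where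
  "serial_decomp V E s t Vs Es ss \<longleftrightarrow>
     s \<noteq> t \<and> length Vs \<ge> 2 \<and> length Es = length Vs \<and> length ss = length Vs + 1 \<and>
     ss ! 0 = s \<and> ss ! length Vs = t \<and>
     (\<forall>i < length Vs. osp (Vs ! i) (Es ! i) (ss ! i) (ss ! Suc i)) \<and>
     (\<forall>i. Suc i < length Vs \<longrightarrow> Vs ! i \<inter> Vs ! Suc i = {ss ! Suc i}) \<and>
     (\<forall>i j. i < length Vs \<longrightarrow> j < length Vs \<longrightarrow> i + 2 \<le> j \<longrightarrow> Vs ! i \<inter> Vs ! j = {}) \<and>
     V = (\<Union>i < length Vs. Vs ! i) \<and> E = (\<Union>i < length Vs. Es ! i)"

definition is_serial :: "'a set \<Rightarrow> 'a set set \<Rightarrow> 'a \<Rightarrow> 'a \<Rightarrow> bool" where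
  "is_serial V E s t \<longleftrightarrow> (\<exists>Vs Es ss. serial_decomp V E s t Vs Es ss)"

definition graph_iso :: "'a set \<Rightarrow> 'a set set \<Rightarrow> 'a set \<Rightarrow> 'a set set \<Rightarrow> ('a \<Rightarrow> 'a) \<Rightarrow> bool" where
  "graph_iso V1 E1 V2 E2 f \<longleftrightarrow> bij_betw f V1 V2 \<and>
     (\<forall>x\<in>V1. \<forall>y\<in>V1. {x, y} \<in> E1 \<longleftrightarrow> {f x, f y} \<in> E2)"

text \<open>Automorphisms, as functions that are the identity outside V (so that they form a group
  under composition and sets of them can be compared extensionally).\<close>
definition graph_aut :: "'a set \<Rightarrow> 'a set set \<Rightarrow> ('a \<Rightarrow> 'a) \<Rightarrow> bool" where
  "graph_aut V E \<sigma> \<longleftrightarrow> graph_iso V E V E \<sigma> \<and> (\<forall>x. x \<notin> V \<longrightarrow> \<sigma> x = x)"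

definition Aut_or :: "'a set \<Rightarrow> 'a set set \<Rightarrow> 'a \<Rightarrow> 'a \<Rightarrow> ('a \<Rightarrow> 'a) set" where
  "Aut_or V E s t = {\<sigma>. graph_aut V E \<sigma> \<and> \<sigma> s = s \<and> \<sigma> t = t}"

definition Aut_semi :: "'a set \<Rightarrow> 'a set set \<Rightarrow> 'a \<Rightarrow> 'a \<Rightarrow> ('a \<Rightarrow> 'a) set" where
  "Aut_semi V E s t = {\<sigma>. graph_aut V E \<sigma> \<and> {\<sigma> s, \<sigma> t} = {s, t}}"

text \<open>Family r_1..r_k (0-indexed) of isomorphisms G_i -> G_{k-i+1} reversing terminals.\<close>
definition reversal_family :: "'a set list \<Rightarrow> 'a set set list \<Rightarrow> 'a list \<Rightarrow> ('a \<Rightarrow> 'a) list \<Rightarrow> bool" where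
  "reversal_family Vs Es ss rs \<longleftrightarrow> length rs = length Vs \<and>
     (\<forall>i < length Vs.
        graph_iso (Vs ! i) (Es ! i) (Vs ! (length Vs - 1 - i)) (Es ! (length Vs - 1 - i)) (rs ! i) \<and>
        (rs ! i) (ss ! i) = ss ! (length Vs - i) \<and>
        (rs ! i) (ss ! Suc i) = ss ! (length Vs - 1 - i))"

end

theory Submission
  imports Defs "HOL-Combinatorics.Permutations"
begin

(* The terminals s = s_1, ..., s_{k+1} = t are exactly the vertices that separate s from t:
   each s_j is a cut vertex of the chain, and no other vertex is one because a non-serial
   oriented series-parallel graph has no inner vertex separating its terminals.  Likewise
   G_i is the set of vertices separated from s by s_i and from t by s_{i+1}.  Both
   descriptions are invariant under automorphisms.  Since s_i separates s_j from t exactly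
   when j <= i, an automorphism exchanging s and t reverses the order of the terminals,
   hence maps each G_i onto G_{k-i+1} with its terminals reversed: it is itself a reversal
   family.  Conversely a reversal family glues to an automorphism r exchanging s and t, and
   every automorphism exchanging s and t is r composed with an oriented one. *)

section \<open>Paths avoiding a set of vertices\<close>

definition path_avoiding :: "'a set set \<Rightarrow> 'a set \<Rightarrow> 'a \<Rightarrow> 'a \<Rightarrow> bool" where
  "path_avoiding E X a b \<longleftrightarrow> a \<notin> X \<and> (\<lambda>x y. {x, y} \<in> E \<and> x \<notin> X \<and> y \<notin> X)\<^sup>*\<^sup>* a b"

(* Both ends of the path must avoid X, so an end vertex separates itself from anything. *)
abbreviation separates :: "'a set set \<Rightarrow> 'a \<Rightarrow> 'a \<Rightarrow> 'a \<Rightarrow> bool" where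
  "separates E v a b \<equiv> \<not> path_avoiding E {v} a b"

lemma path_avoiding_refl: "a \<notin> X \<Longrightarrow> path_avoiding E X a a"
  unfolding path_avoiding_def by simp

lemma path_avoiding_edge: "{a, b} \<in> E \<Longrightarrow> a \<notin> X \<Longrightarrow> b \<notin> X \<Longrightarrow> path_avoiding E X a b"
  unfolding path_avoiding_def by auto

lemma path_avoiding_trans:
  "path_avoiding E X a b \<Longrightarrow> path_avoiding E X b c \<Longrightarrow> path_avoiding E X a c"
  unfolding path_avoiding_def by auto

lemma path_avoiding_endpoints: "path_avoiding E X a b \<Longrightarrow> a \<notin> X \<and> b \<notin> X"
  unfolding path_avoiding_def by (auto elim: rtranclp.cases)

lemma path_avoiding_sym:
  assumes "path_avoiding E X a b"
  shows "path_avoiding E X b a"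
proof -
  have "symp (\<lambda>x y. {x, y} \<in> E \<and> x \<notin> X \<and> y \<notin> X)\<^sup>*\<^sup>*"
    by (rule symp_rtranclp) (auto intro: sympI simp: insert_commute)
  with assms path_avoiding_endpoints[OF assms] show ?thesis
    unfolding path_avoiding_def by (blast dest: sympD)
qed

lemma path_avoiding_commute: "path_avoiding E X a b \<longleftrightarrow> path_avoiding E X b a"
  using path_avoiding_sym by metis

lemma path_avoiding_lift:
  assumes "path_avoiding E' X a b" and "\<forall>e\<in>E'. e \<subseteq> V'" and "a \<in> V'"
    and "E' \<subseteq> E" and "Y \<inter> V' \<subseteq> X"
  shows "path_avoiding E Y a b"
proof -
  have "(\<lambda>x y. {x, y} \<in> E' \<and> x \<notin> X \<and> y \<notin> X) \<le> (\<lambda>x y. {x, y} \<in> E \<and> x \<notin> Y \<and> y \<notin> Y)"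
    using assms(2,4,5) by blast
  then show ?thesis
    using assms(1,3,5) rtranclp_mono unfolding path_avoiding_def by blast
qed

lemma path_avoiding_mono:
  "path_avoiding E' X a b \<Longrightarrow> E' \<subseteq> E \<Longrightarrow> Y \<subseteq> X \<Longrightarrow> path_avoiding E Y a b"
  by (rule path_avoiding_lift[where V' = UNIV]) auto

lemma path_avoiding_closed:
  assumes "path_avoiding E X a b" and "a \<in> L"
    and "\<And>y z. y \<in> L \<Longrightarrow> {y, z} \<in> E \<Longrightarrow> y \<notin> X \<Longrightarrow> z \<notin> X \<Longrightarrow> z \<in> L"
  shows "b \<in> L"
  using assms(1) unfolding path_avoiding_def
  by (auto elim!: rtranclp_induct intro: assms(2,3))

lemma path_avoiding_image:
  assumes "path_avoiding E X a b" and "inj f" and "\<And>x y. {x, y} \<in> E \<Longrightarrow> {f x, f y} \<in> E'"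
  shows "path_avoiding E' (f ` X) (f a) (f b)"
proof -
  from assms(1) have "a \<notin> X" and "(\<lambda>x y. {x, y} \<in> E \<and> x \<notin> X \<and> y \<notin> X)\<^sup>*\<^sup>* a b"
    unfolding path_avoiding_def by auto
  from this(2) have "(\<lambda>x y. {x, y} \<in> E' \<and> x \<notin> f ` X \<and> y \<notin> f ` X)\<^sup>*\<^sup>* (f a) (f b)"
  proof (induction rule: rtranclp_induct)
    case (step y z)
    show ?case
      by (rule rtranclp.rtrancl_into_rtrancl[OF step.IH])
        (use step(2) assms(3) in \<open>simp add: inj_image_mem_iff[OF assms(2)]\<close>)
  qed simp
  with \<open>a \<notin> X\<close> show ?thesis
    unfolding path_avoiding_def by (simp add: inj_image_mem_iff[OF assms(2)])
qed

lemma path_avoiding_chain: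
  assumes "a < b" and "\<And>l. a \<le> l \<Longrightarrow> l < b \<Longrightarrow> path_avoiding E X (f l) (f (Suc l))"
  shows "path_avoiding E X (f a) (f b)"
  using assms
proof (induction b)
  case (Suc b)
  then show ?case
    by (cases "a = b") (auto intro: path_avoiding_trans)
qed simp

section \<open>Graph automorphisms\<close>

lemma graph_aut_iff_permutes:
  "graph_aut V E f \<longleftrightarrow> f permutes V \<and> (\<forall>x\<in>V. \<forall>y\<in>V. {x, y} \<in> E \<longleftrightarrow> {f x, f y} \<in> E)"
  unfolding graph_aut_def graph_iso_def
  by (metis bij_imp_permutes permutes_imp_bij permutes_not_in)

lemma graph_aut_permutes: "graph_aut V E f \<Longrightarrow> f permutes V"
  unfolding graph_aut_iff_permutes by blast

lemma graph_aut_edge: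
  "graph_aut V E f \<Longrightarrow> x \<in> V \<Longrightarrow> y \<in> V \<Longrightarrow> {x, y} \<in> E \<longleftrightarrow> {f x, f y} \<in> E"
  unfolding graph_aut_def graph_iso_def by blast

lemma graph_aut_inv:
  assumes "graph_aut V E f"
  shows "graph_aut V E (inv f)"
proof -
  have perm: "f permutes V" and edges: "\<forall>x\<in>V. \<forall>y\<in>V. {x, y} \<in> E \<longleftrightarrow> {f x, f y} \<in> E"
    using assms unfolding graph_aut_iff_permutes by blast+
  have "\<forall>x\<in>V. \<forall>y\<in>V. {x, y} \<in> E \<longleftrightarrow> {inv f x, inv f y} \<in> E"
  proof (intro ballI)
    fix x y
    assume "x \<in> V" "y \<in> V"
    then have "inv f x \<in> V" "inv f y \<in> V"
      using permutes_in_image[OF permutes_inv[OF perm]] by auto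
    from edges[rule_format, OF this] show "{x, y} \<in> E \<longleftrightarrow> {inv f x, inv f y} \<in> E"
      by (simp only: permutes_inverses(1)[OF perm])
  qed
  with permutes_inv[OF perm] show ?thesis
    unfolding graph_aut_iff_permutes by (rule conjI)
qed

lemma graph_aut_comp:
  assumes f: "graph_aut V E f" and g: "graph_aut V E g"
  shows "graph_aut V E (f \<circ> g)"
proof -
  have perm: "f permutes V" "g permutes V"
    and edges: "\<forall>x\<in>V. \<forall>y\<in>V. {x, y} \<in> E \<longleftrightarrow> {f x, f y} \<in> E"
      "\<forall>x\<in>V. \<forall>y\<in>V. {x, y} \<in> E \<longleftrightarrow> {g x, g y} \<in> E"
    using f g unfolding graph_aut_iff_permutes by blast+
  have "\<forall>x\<in>V. \<forall>y\<in>V. {x, y} \<in> E \<longleftrightarrow> {(f \<circ> g) x, (f \<circ> g) y} \<in> E"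
  proof (intro ballI)
    fix x y
    assume xy: "x \<in> V" "y \<in> V"
    then have "g x \<in> V" "g y \<in> V"
      using permutes_in_image[OF perm(2)] by auto
    with xy show "{x, y} \<in> E \<longleftrightarrow> {(f \<circ> g) x, (f \<circ> g) y} \<in> E"
      using edges(1)[rule_format, of "g x" "g y"] edges(2)[rule_format, of x y] by simp
  qed
  with permutes_compose[OF perm(2,1)] show ?thesis
    unfolding graph_aut_iff_permutes by (rule conjI)
qed

lemma path_avoiding_graph_aut:
  assumes "graph_aut V E f" and "\<And>e. e \<in> E \<Longrightarrow> e \<subseteq> V" and "path_avoiding E X a b"
  shows "path_avoiding E (f ` X) (f a) (f b)"
proof (rule path_avoiding_image[OF assms(3)])
  show "inj f"
    using permutes_inj[OF graph_aut_permutes[OF assms(1)]] .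
  show "{f x, f y} \<in> E" if "{x, y} \<in> E" for x y
    using that graph_aut_edge[OF assms(1)] assms(2)[OF that] by blast
qed

lemma separates_graph_aut_iff:
  assumes "graph_aut V E f" and "\<And>e. e \<in> E \<Longrightarrow> e \<subseteq> V"
  shows "separates E (f v) (f a) (f b) \<longleftrightarrow> separates E v a b"
proof
  assume "separates E (f v) (f a) (f b)"
  then show "separates E v a b"
    using path_avoiding_graph_aut[OF assms, of "{v}" a b] by auto
next
  assume sep: "separates E v a b"
  have inv_f: "inv f (f x) = x" for x
    using permutes_inverses(2)[OF graph_aut_permutes[OF assms(1)]] .
  show "separates E (f v) (f a) (f b)"
  proof
    assume "path_avoiding E {f v} (f a) (f b)"
    from path_avoiding_graph_aut[OF graph_aut_inv[OF assms(1)] assms(2) this]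
    have "path_avoiding E {v} a b"
      by (simp add: inv_f)
    with sep show False ..
  qed
qed

lemma Aut_semi_cases:
  assumes "s \<noteq> t" and "\<sigma> \<in> Aut_semi V E s t"
  shows "\<sigma> \<in> Aut_or V E s t \<or> (graph_aut V E \<sigma> \<and> \<sigma> s = t \<and> \<sigma> t = s)"
proof -
  have "\<sigma> permutes V"
    using assms(2) graph_aut_permutes unfolding Aut_semi_def by blast
  then have "\<sigma> s \<noteq> \<sigma> t"
    using assms(1) permutes_inj by (metis injD)
  then show ?thesis
    using assms unfolding Aut_semi_def Aut_or_def by (auto simp: doubleton_eq_iff)
qed

lemma Aut_semi_eq_coset:
  assumes "s \<noteq> t" and r: "graph_aut V E r" "r s = t" "r t = s"
  shows "Aut_semi V E s t = Aut_or V E s t \<union> (\<lambda>\<sigma>. r \<circ> \<sigma>) ` Aut_or V E s t"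
proof (intro equalityI subsetI)
  have perm: "r permutes V"
    using graph_aut_permutes[OF r(1)] .
  fix \<sigma>
  assume "\<sigma> \<in> Aut_semi V E s t"
  from Aut_semi_cases[OF assms(1) this]
  consider "\<sigma> \<in> Aut_or V E s t" | "graph_aut V E \<sigma>" "\<sigma> s = t" "\<sigma> t = s"
    by (elim disjE conjE)
  then show "\<sigma> \<in> Aut_or V E s t \<union> (\<lambda>\<sigma>. r \<circ> \<sigma>) ` Aut_or V E s t"
  proof cases
    case 1
    then show ?thesis ..
  next
    case 2
    have "graph_aut V E (inv r \<circ> \<sigma>)"
      by (rule graph_aut_comp[OF graph_aut_inv[OF r(1)] 2(1)])
    moreover have "inv r t = s" "inv r s = t"
      using r(2,3) by (simp_all add: permutes_inv_eq[OF perm])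
    ultimately have "inv r \<circ> \<sigma> \<in> Aut_or V E s t"
      using 2(2,3) unfolding Aut_or_def by simp
    moreover have "\<sigma> = r \<circ> (inv r \<circ> \<sigma>)"
      by (simp only: o_assoc permutes_inv_o(1)[OF perm] id_o)
    ultimately show ?thesis
      by blast
  qed
next
  fix \<tau>
  assume "\<tau> \<in> Aut_or V E s t \<union> (\<lambda>\<sigma>. r \<circ> \<sigma>) ` Aut_or V E s t"
  then show "\<tau> \<in> Aut_semi V E s t"
    using graph_aut_comp[OF r(1)] r(2,3)
    unfolding Aut_or_def Aut_semi_def by (auto simp: insert_commute)
qed

lemma Aut_semi_eq_Aut_or:
  assumes "s \<noteq> t" and "\<nexists>\<sigma>. graph_aut V E \<sigma> \<and> \<sigma> s = t \<and> \<sigma> t = s"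
  shows "Aut_semi V E s t = Aut_or V E s t"
proof (intro equalityI subsetI)
  fix \<sigma>
  assume "\<sigma> \<in> Aut_semi V E s t"
  from Aut_semi_cases[OF assms(1) this] assms(2) show "\<sigma> \<in> Aut_or V E s t"
    by (elim disjE conjE) auto
qed (auto simp: Aut_or_def Aut_semi_def)

section \<open>Oriented series-parallel graphs\<close>

lemma osp_wellformed:
  "osp V E s t \<Longrightarrow> s \<in> V \<and> t \<in> V \<and> s \<noteq> t \<and> finite V \<and> (\<forall>e\<in>E. e \<subseteq> V \<and> card e = 2)"
proof (induction rule: osp.induct)
  case (serial s t Vs Es ss V E)
  have k: "0 < length Vs" "length Vs - 1 < length Vs" "Suc (length Vs - 1) = length Vs"
    using serial.hyps(2) by auto
  have "s \<in> Vs ! 0" "t \<in> Vs ! (length Vs - 1)"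
    using serial.IH k serial.hyps(5,6) by metis+
  then show ?case
    using serial.IH serial.hyps(1,9,10) k by fastforce
next
  case (parallel s t Vs Es V E)
  have "0 < length Vs"
    using parallel.hyps(2) by linarith
  then show ?case
    using parallel.IH parallel.hyps(1,5,6) by fastforce
qed auto

lemma UN_nth_eq_Union_set: "(\<Union>i < length xs. xs ! i) = \<Union>(set xs)"
  by (auto simp: in_set_conv_nth intro: nth_mem)

lemma serial_decomp_rev:
  assumes sd: "serial_decomp V E s t Vs Es ss"
    and swapped: "\<forall>i < length Vs. osp (Vs ! i) (Es ! i) (ss ! Suc i) (ss ! i)"
  shows "serial_decomp V E t s (rev Vs) (rev Es) (rev ss)"
proof -
  let ?k = "length Vs"
  note sd' = sd[unfolded serial_decomp_def]
  have len: "length Es = ?k" "length ss = Suc ?k"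
    using sd' by auto
  have Vs_rev: "rev Vs ! i = Vs ! (?k - Suc i)" and Es_rev: "rev Es ! i = Es ! (?k - Suc i)"
    if "i < ?k" for i
    using that len by (simp_all add: rev_nth)
  have ss_rev: "rev ss ! i = ss ! (?k - i)" if "i \<le> ?k" for i
    using that len by (simp add: rev_nth)
  have "osp (rev Vs ! i) (rev Es ! i) (rev ss ! i) (rev ss ! Suc i)" if "i < ?k" for i
    using swapped[rule_format, of "?k - Suc i"] that
    by (simp add: Vs_rev Es_rev ss_rev Suc_diff_Suc)
  moreover have "rev Vs ! i \<inter> rev Vs ! Suc i = {rev ss ! Suc i}" if "Suc i < ?k" for i
  proof -
    define j where "j = ?k - Suc (Suc i)"
    have "Suc j < ?k" "Suc j = ?k - Suc i" "j = ?k - Suc (Suc i)"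
      using that unfolding j_def by auto
    moreover have "Vs ! j \<inter> Vs ! Suc j = {ss ! Suc j}"
      using sd' \<open>Suc j < ?k\<close> by blast
    ultimately show ?thesis
      using that by (simp add: Vs_rev ss_rev Int_commute)
  qed
  moreover have "rev Vs ! i \<inter> rev Vs ! j = {}" if "i < ?k" "j < ?k" "i + 2 \<le> j" for i j
  proof -
    have "Vs ! (?k - Suc j) \<inter> Vs ! (?k - Suc i) = {}"
      using sd' that by simp
    then show ?thesis
      using that by (simp add: Vs_rev Int_commute)
  qed
  moreover have "(\<Union>i < ?k. rev Vs ! i) = (\<Union>i < ?k. Vs ! i)"
    and "(\<Union>i < ?k. rev Es ! i) = (\<Union>i < ?k. Es ! i)"
    using UN_nth_eq_Union_set[of "rev Vs"] UN_nth_eq_Union_set[of Vs]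
      UN_nth_eq_Union_set[of "rev Es"] UN_nth_eq_Union_set[of Es] len by simp_all
  ultimately show ?thesis
    using sd' len unfolding serial_decomp_def by (auto simp: ss_rev)
qed

lemma serial_decomp_imp_osp: "serial_decomp V E s t Vs Es ss \<Longrightarrow> osp V E s t"
  unfolding serial_decomp_def by (elim conjE) (rule osp.serial)

lemma osp_swap: "osp V E s t \<Longrightarrow> osp V E t s"
proof (induction rule: osp.induct)
  case (edge s t)
  then show ?case
    using osp.edge[of t s] by (simp add: insert_commute)
next
  case (serial s t Vs Es ss V E)
  then have "serial_decomp V E s t Vs Es ss"
    unfolding serial_decomp_def by blast
  then show ?case
    using serial.IH by (blast intro: serial_decomp_imp_osp serial_decomp_rev)
next
  case (parallel s t Vs Es V E)
  then show ?case
    using osp.parallel[of t s Vs Es V E] by (simp add: insert_commute)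
qed

definition reachable_from_source :: "'a set \<Rightarrow> 'a set set \<Rightarrow> 'a \<Rightarrow> 'a \<Rightarrow> bool" where
  "reachable_from_source V E s t \<longleftrightarrow>
     path_avoiding E {} s t \<and> (\<forall>x \<in> V - {t}. path_avoiding E {t} s x)"

lemma reachable_from_source_path:
  "reachable_from_source V E s t \<Longrightarrow> x \<in> V \<Longrightarrow> path_avoiding E {} s x"
  unfolding reachable_from_source_def by (cases "x = t") (auto intro: path_avoiding_mono)

locale serial_superedge =
  fixes V :: "'a set" and E :: "'a set set" and s t :: 'a
    and Vs :: "'a set list" and Es :: "'a set set list" and ss :: "'a list"
  assumes decomp: "serial_decomp V E s t Vs Es ss"
begin

abbreviation k :: nat where "k \<equiv> length Vs"

lemma
  shows s_neq_t: "s \<noteq> t" and two_le_k: "2 \<le> k"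
    and length_ss: "length ss = Suc k"
    and first_terminal: "ss ! 0 = s" and last_terminal: "ss ! k = t"
    and component_osp: "i < k \<Longrightarrow> osp (Vs ! i) (Es ! i) (ss ! i) (ss ! Suc i)"
    and adjacent_components: "Suc i < k \<Longrightarrow> Vs ! i \<inter> Vs ! Suc i = {ss ! Suc i}"
    and distant_components: "j < k \<Longrightarrow> i + 2 \<le> j \<Longrightarrow> Vs ! i \<inter> Vs ! j = {}"
    and V_eq: "V = (\<Union>i < k. Vs ! i)" and E_eq: "E = (\<Union>i < k. Es ! i)"
  using decomp unfolding serial_decomp_def by auto

lemma k_pos: "0 < k"
  using two_le_k by linarith

lemma component_wellformed:
  assumes "i < k"
  shows "ss ! i \<in> Vs ! i" and "ss ! Suc i \<in> Vs ! i" and "ss ! i \<noteq> ss ! Suc i"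
    and "finite (Vs ! i)" and "\<And>e. e \<in> Es ! i \<Longrightarrow> e \<subseteq> Vs ! i \<and> card e = 2"
  using osp_wellformed[OF component_osp[OF assms]] by auto

lemma component_subset: "i < k \<Longrightarrow> Vs ! i \<subseteq> V" "i < k \<Longrightarrow> Es ! i \<subseteq> E"
  using V_eq E_eq by auto

lemma shared_vertex: "x \<in> Vs ! a \<Longrightarrow> x \<in> Vs ! b \<Longrightarrow> a < b \<Longrightarrow> b < k \<Longrightarrow> b = Suc a \<and> x = ss ! b"
  using adjacent_components[of a] distant_components[of b a] by (cases "b = Suc a") auto

lemma terminal_eq_iff:
  assumes "i \<le> k" "j \<le> k"
  shows "ss ! i = ss ! j \<longleftrightarrow> i = j"
proof -
  have "ss ! i \<noteq> ss ! j" if "i < j" "j \<le> k" for i j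
  proof
    assume eq: "ss ! i = ss ! j"
    have i_mem: "ss ! i \<in> Vs ! i"
      using component_wellformed(1)[of i] that by simp
    have j_mem: "ss ! i \<in> Vs ! (j - 1)"
      using component_wellformed(2)[of "j - 1"] that eq by simp
    show False
    proof (cases "j = Suc i")
      case True
      then show False
        using eq component_wellformed(3)[of i] that by simp
    next
      case False
      then have "j - 1 = Suc i" "ss ! i = ss ! (j - 1)"
        using shared_vertex[OF i_mem j_mem] that by simp_all
      then show False
        using component_wellformed(3)[of i] that by simp
    qed
  qed
  then show ?thesis
    using assms by (metis linorder_neqE_nat)
qed

lemma terminal_in_previous: "0 < j \<Longrightarrow> j \<le> k \<Longrightarrow> ss ! j \<in> Vs ! (j - 1)"
  using component_wellformed(2)[of "j - 1"] by simp

lemma terminal_mem_component: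
  assumes "j \<le> k" "l < k" "ss ! j \<in> Vs ! l"
  shows "l = j \<or> Suc l = j"
proof -
  define m where "m = (if j < k then j else j - 1)"
  have m: "m < k" "m = j \<or> Suc m = j" "ss ! j \<in> Vs ! m"
    using component_wellformed(1)[of j] terminal_in_previous[of j] assms k_pos
    unfolding m_def by auto
  consider "l = m" | "l < m" | "m < l"
    by linarith
  then show ?thesis
  proof cases
    case 2
    then show ?thesis
      using shared_vertex[OF assms(3) m(3) 2 m(1)] terminal_eq_iff[of j m] m assms by auto
  next
    case 3
    then show ?thesis
      using shared_vertex[OF m(3) assms(3) 3 assms(2)] terminal_eq_iff[of j l] m assms by auto
  qed (use m in auto)
qed

lemma edge_subset_V: "e \<in> E \<Longrightarrow> e \<subseteq> V"
  using E_eq component_wellformed(5) component_subset by blast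

lemma finite_V: "finite V"
  using V_eq component_wellformed(4) by auto

lemma edge_component:
  assumes "{x, y} \<in> E"
  obtains m where "m < k" "{x, y} \<in> Es ! m" "x \<in> Vs ! m" "y \<in> Vs ! m" "x \<noteq> y"
proof -
  obtain m where m: "m < k" "{x, y} \<in> Es ! m"
    using assms E_eq by auto
  then have "{x, y} \<subseteq> Vs ! m" "card {x, y} = 2"
    using component_wellformed(5) by blast+
  then show ?thesis
    using that m by (auto simp: card_insert_if split: if_splits)
qed

lemma edge_iff:
  assumes "i < k" "x \<in> Vs ! i" "y \<in> Vs ! i"
  shows "{x, y} \<in> Es ! i \<longleftrightarrow> {x, y} \<in> E"
proof
  assume "{x, y} \<in> E"
  then obtain m where m: "m < k" "{x, y} \<in> Es ! m" "x \<in> Vs ! m" "y \<in> Vs ! m" "x \<noteq> y"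
    by (rule edge_component)
  have "m = i"
  proof (rule ccontr)
    assume "m \<noteq> i"
    then have "x = y"
      using shared_vertex[of x m i] shared_vertex[of y m i] shared_vertex[of x i m]
        shared_vertex[of y i m] assms m by (cases "m < i") auto
    with m show False by simp
  qed
  with m show "{x, y} \<in> Es ! i" by simp
qed (use component_subset assms in blast)

lemma crossing_vertex:
  "x \<in> Vs ! l \<Longrightarrow> l < c \<Longrightarrow> x \<in> Vs ! m \<Longrightarrow> c \<le> m \<Longrightarrow> m < k \<Longrightarrow> x = ss ! c"
  using shared_vertex[of x l m] by (force simp: le_Suc_eq)

lemma separates_cut:
  assumes a: "a \<in> Vs ! l" "l < c" and b: "b \<in> Vs ! m" "c \<le> m" "m < k"
  shows "separates E (ss ! c) a b"
proof
  assume path: "path_avoiding E {ss ! c} a b"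
  let ?L = "\<Union>l < c. Vs ! l"
  have "z \<in> ?L" if "y \<in> ?L" "{y, z} \<in> E" "y \<noteq> ss ! c" for y z
  proof -
    obtain m' where m': "m' < k" "y \<in> Vs ! m'" "z \<in> Vs ! m'"
      using \<open>{y, z} \<in> E\<close> by (rule edge_component)
    then show ?thesis
      using that crossing_vertex[of y _ c m'] by (cases "m' < c") auto
  qed
  then have "b \<in> ?L"
    using path_avoiding_closed[OF path, of ?L] a by blast
  then have "b = ss ! c"
    using crossing_vertex b by blast
  then show False
    using path_avoiding_endpoints[OF path] by simp
qed

lemma reversed: "serial_superedge V E t s (rev Vs) (rev Es) (rev ss)"
  by (rule serial_superedge.intro, rule serial_decomp_rev[OF decomp])
    (blast intro: osp_swap[OF component_osp])

(* Component reachability is a hypothesis here because these lemmas serve the induction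
   proving it, osp_reachable_from_source. *)
context
  assumes components: "\<And>i. i < k \<Longrightarrow> reachable_from_source (Vs ! i) (Es ! i) (ss ! i) (ss ! Suc i)"
begin

lemma component_path:
  assumes "l < k" "x \<in> Vs ! l" "X \<inter> Vs ! l = {}"
  shows "path_avoiding E X (ss ! l) x"
proof -
  have "path_avoiding (Es ! l) {} (ss ! l) x"
    using reachable_from_source_path[OF components[OF assms(1)] assms(2)] .
  then show ?thesis
    by (rule path_avoiding_lift)
      (use component_wellformed(1,5)[OF assms(1)] component_subset(2)[OF assms(1)] assms(3) in auto)
qed

lemma component_path_avoiding_next:
  assumes "l < k" "x \<in> Vs ! l" "x \<noteq> ss ! Suc l" "X \<inter> Vs ! l \<subseteq> {ss ! Suc l}"
  shows "path_avoiding E X (ss ! l) x"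
proof -
  have "path_avoiding (Es ! l) {ss ! Suc l} (ss ! l) x"
    using components[OF assms(1)] assms(2,3) unfolding reachable_from_source_def by blast
  then show ?thesis
    by (rule path_avoiding_lift)
      (use component_wellformed(1,5)[OF assms(1)] component_subset(2)[OF assms(1)] assms(4) in auto)
qed

lemma terminals_path:
  assumes "a < b" "b \<le> k" "\<And>l. a \<le> l \<Longrightarrow> l < b \<Longrightarrow> X \<inter> Vs ! l = {}"
  shows "path_avoiding E X (ss ! a) (ss ! b)"
proof (rule path_avoiding_chain[of a b E X "(!) ss"])
  fix l
  assume "a \<le> l" "l < b"
  then show "path_avoiding E X (ss ! l) (ss ! Suc l)"
    using component_path[of l "ss ! Suc l" X] component_wellformed(2)[of l] assms(2,3) by simp
qed (rule assms(1))

lemma path_from_s_avoiding_terminal: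
  assumes "i \<le> k" "j < i" "x \<in> Vs ! j" "x \<noteq> ss ! i"
  shows "path_avoiding E {ss ! i} s x"
proof -
  have avoid: "{ss ! i} \<inter> Vs ! l = {}" if "l < j" for l
    using terminal_mem_component[of i l] that assms(1,2) by auto
  have "path_avoiding E {ss ! i} (ss ! 0) (ss ! j)"
  proof (cases "j = 0")
    case True
    then show ?thesis
      using terminal_eq_iff[of 0 i] assms(1,2) by (auto intro: path_avoiding_refl)
  qed (use assms avoid in \<open>auto intro: terminals_path\<close>)
  moreover have "path_avoiding E {ss ! i} (ss ! j) x"
  proof (cases "i = Suc j")
    case True
    then show ?thesis
      using assms by (auto intro: component_path_avoiding_next)
  next
    case False
    then show ?thesis
      using terminal_mem_component[of i j] assms by (auto intro: component_path)
  qed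
  ultimately show ?thesis
    using first_terminal path_avoiding_trans by metis
qed

end

end

lemma osp_reachable_from_source: "osp V E s t \<Longrightarrow> reachable_from_source V E s t"
proof (induction rule: osp.induct)
  case (edge s t)
  then show ?case
    unfolding reachable_from_source_def by (auto intro: path_avoiding_edge path_avoiding_refl)
next
  case (serial s t Vs Es ss V E)
  then interpret serial_superedge V E s t Vs Es ss
    by unfold_locales (auto simp: serial_decomp_def)
  have components: "reachable_from_source (Vs ! i) (Es ! i) (ss ! i) (ss ! Suc i)" if "i < k" for i
    using serial.IH that by blast
  have "path_avoiding E {} s t"
    using terminals_path[OF components, of 0 k] k_pos first_terminal last_terminal by auto
  moreover have "path_avoiding E {t} s x" if x: "x \<in> V - {t}" for x
  proof -
    obtain j where "j < k" "x \<in> Vs ! j"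
      using x V_eq by auto
    then show ?thesis
      using path_from_s_avoiding_terminal[OF components, of k j x] x last_terminal by auto
  qed
  ultimately show ?case
    unfolding reachable_from_source_def by blast
next
  case (parallel s t Vs Es V E)
  have "0 < length Vs"
    using parallel.hyps(2) by linarith
  then show ?case
    using parallel.IH parallel.hyps(5,6) unfolding reachable_from_source_def
    by (fastforce intro: path_avoiding_mono)
qed

lemma nonserial_no_cut_vertex:
  assumes "osp V E a b" and "\<not> is_serial V E a b" and "v \<noteq> a" "v \<noteq> b"
  shows "path_avoiding E {v} a b"
  using assms(1)
proof (cases rule: osp.cases)
  case edge
  then show ?thesis
    using assms(3,4) by (auto intro: path_avoiding_edge)
next
  case (serial Vs Es ss)
  then have "serial_decomp V E a b Vs Es ss"
    unfolding serial_decomp_def by blast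
  with assms(2) show ?thesis
    unfolding is_serial_def by blast
next
  case (parallel Vs Es)
  obtain i where i: "i < length Vs" "v \<notin> Vs ! i"
  proof -
    have "0 < length Vs" "1 < length Vs"
      using parallel by linarith+
    moreover from this have "Vs ! 0 \<inter> Vs ! 1 = {a, b}"
      using parallel by blast
    ultimately show thesis
      using that assms(3,4) by blast
  qed
  have osp_i: "osp (Vs ! i) (Es ! i) a b"
    using parallel i by blast
  have "path_avoiding (Es ! i) {} a b"
    using osp_reachable_from_source[OF osp_i] unfolding reachable_from_source_def by blast
  then show ?thesis
    by (rule path_avoiding_lift) (use osp_wellformed[OF osp_i] parallel i in auto)
qed

section \<open>Separating vertices of a serial superedge\<close>

context serial_superedge
begin

lemma components_reachable:
  "i < k \<Longrightarrow> reachable_from_source (Vs ! i) (Es ! i) (ss ! i) (ss ! Suc i)"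
  using osp_reachable_from_source[OF component_osp] .

lemma separates_terminals_iff:
  assumes "a \<le> b" "b \<le> k" "i \<le> k"
  shows "separates E (ss ! i) (ss ! a) (ss ! b) \<longleftrightarrow> a \<le> i \<and> i \<le> b"
proof
  assume sep: "separates E (ss ! i) (ss ! a) (ss ! b)"
  show "a \<le> i \<and> i \<le> b"
  proof (rule ccontr)
    assume out: "\<not> (a \<le> i \<and> i \<le> b)"
    have "path_avoiding E {ss ! i} (ss ! a) (ss ! b)"
    proof (cases "a = b")
      case True
      then show ?thesis
        using terminal_eq_iff[of a i] assms out by (auto intro: path_avoiding_refl)
    next
      case False
      show ?thesis
      proof (rule terminals_path[OF components_reachable])
        fix l
        assume "a \<le> l" "l < b"
        then show "{ss ! i} \<inter> Vs ! l = {}"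
          using terminal_mem_component[of i l] assms out by auto
      qed (use False assms in auto)
    qed
    with sep show False by simp
  qed
next
  assume "a \<le> i \<and> i \<le> b"
  then consider "i = a" | "i = b" | "a < i" "i < b"
    by linarith
  then show "separates E (ss ! i) (ss ! a) (ss ! b)"
  proof cases
    case 3
    then show ?thesis
      using separates_cut[of "ss ! a" a i "ss ! b" "b - 1"] component_wellformed(1)[of a]
        terminal_in_previous[of b] assms by auto
  qed (auto dest: path_avoiding_endpoints)
qed

lemma separates_from_s:
  assumes "j < k" "x \<in> Vs ! j" "i \<le> j"
  shows "separates E (ss ! i) s x"
proof (cases "i = 0")
  case True
  then show ?thesis
    using first_terminal by (auto dest: path_avoiding_endpoints)
next
  case False
  then show ?thesis
    using separates_cut[of s 0 i x j] component_wellformed(1)[of 0] first_terminal k_pos assms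
    by auto
qed

lemma rev_Vs_nth: "j < k \<Longrightarrow> rev Vs ! (k - Suc j) = Vs ! j"
  by (simp add: rev_nth Suc_diff_Suc)

lemma rev_ss_nth: "j < k \<Longrightarrow> rev ss ! (k - Suc j) = ss ! Suc j"
  using length_ss by (simp add: rev_nth Suc_diff_Suc)

(* Statements about t and ss ! Suc i are those about s and ss ! i for the reversed
   decomposition, with i replaced by k - Suc i. *)

lemma component_separated:
  assumes i: "i < k" and x: "x \<in> Vs ! i"
  shows "separates E (ss ! i) s x" and "separates E (ss ! Suc i) t x"
proof -
  interpret rev: serial_superedge V E t s "rev Vs" "rev Es" "rev ss"
    by (rule reversed)
  show "separates E (ss ! i) s x"
    using separates_from_s[OF i x] by simp
  show "separates E (ss ! Suc i) t x"
    using rev.separates_from_s[of "k - Suc i" x "k - Suc i"] x i rev_Vs_nth rev_ss_nth by simp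
qed

lemma separated_in_component:
  assumes i: "i < k" and x: "x \<in> V" "separates E (ss ! i) s x" "separates E (ss ! Suc i) t x"
  shows "x \<in> Vs ! i"
proof (rule ccontr)
  interpret rev: serial_superedge V E t s "rev Vs" "rev Es" "rev ss"
    by (rule reversed)
  assume xi: "x \<notin> Vs ! i"
  obtain j where j: "j < k" "x \<in> Vs ! j"
    using x(1) V_eq by auto
  have "x \<noteq> ss ! i" "x \<noteq> ss ! Suc i"
    using xi component_wellformed(1,2)[OF i] by auto
  consider "j < i" | "i < j"
    using xi j by (metis linorder_neqE_nat)
  then show False
  proof cases
    case 1
    then show False
      using path_from_s_avoiding_terminal[OF components_reachable, of i j x] x j i
        \<open>x \<noteq> ss ! i\<close> by auto
  next
    case 2
    then have "k - Suc j < k - Suc i"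
      using j by linarith
    then have "path_avoiding E {ss ! Suc i} t x"
      using rev.path_from_s_avoiding_terminal[OF rev.components_reachable,
          of "k - Suc i" "k - Suc j" x]
      unfolding rev_Vs_nth[OF j(1)] rev_ss_nth[OF i] using j(2) \<open>x \<noteq> ss ! Suc i\<close> by simp
    with x show False by simp
  qed
qed

end

locale serial_superedge_nonserial = serial_superedge +
  assumes nonserial: "\<forall>i < length Vs. \<not> is_serial (Vs ! i) (Es ! i) (ss ! i) (ss ! Suc i)"
begin

lemma separates_s_t_iff: "separates E v s t \<longleftrightarrow> (\<exists>j \<le> k. v = ss ! j)"
proof
  assume sep: "separates E v s t"
  show "\<exists>j \<le> k. v = ss ! j"
  proof (rule ccontr)
    assume v: "\<not> (\<exists>j \<le> k. v = ss ! j)"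
    have "path_avoiding E {v} (ss ! l) (ss ! Suc l)" if l: "l < k" for l
    proof (cases "v \<in> Vs ! l")
      case True
      have "v \<noteq> ss ! l" "v \<noteq> ss ! Suc l"
        using v l by (auto simp: Suc_le_eq)
      then have "path_avoiding (Es ! l) {v} (ss ! l) (ss ! Suc l)"
        using nonserial_no_cut_vertex[OF component_osp[OF l]] nonserial l by blast
      then show ?thesis
        by (rule path_avoiding_lift)
          (use component_wellformed(1,5)[OF l] component_subset(2)[OF l] in auto)
    next
      case False
      then show ?thesis
        using component_path[OF components_reachable l component_wellformed(2)[OF l]] by auto
    qed
    then have "path_avoiding E {v} (ss ! 0) (ss ! k)"
      using path_avoiding_chain[OF k_pos, of E "{v}" "(!) ss"] by simp
    with sep show False
      using first_terminal last_terminal by simp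
  qed
next
  assume "\<exists>j \<le> k. v = ss ! j"
  then show "separates E v s t"
    using separates_terminals_iff[of 0 k] first_terminal last_terminal by auto
qed

end

section \<open>Automorphisms of a serial superedge\<close>

context serial_superedge
begin

context
  fixes rs :: "('a \<Rightarrow> 'a) list" and r :: "'a \<Rightarrow> 'a"
  assumes rf: "reversal_family Vs Es ss rs"
    and glue: "\<forall>i < k. \<forall>x \<in> Vs ! i. r x = (rs ! i) x" and outside: "\<forall>x. x \<notin> V \<longrightarrow> r x = x"
begin

lemma reversal_family_nth:
  assumes "i < k"
  shows "graph_iso (Vs ! i) (Es ! i) (Vs ! (k - Suc i)) (Es ! (k - Suc i)) (rs ! i)"
    and "(rs ! i) (ss ! i) = ss ! (k - i)" and "(rs ! i) (ss ! Suc i) = ss ! (k - Suc i)"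
  using rf assms unfolding reversal_family_def by auto

lemma glued_component_image: "i < k \<Longrightarrow> r ` (Vs ! i) = Vs ! (k - Suc i)"
  using reversal_family_nth(1) glue unfolding graph_iso_def bij_betw_def
  by (metis (no_types, lifting) image_cong)

lemma glued_image: "r ` V = V"
proof -
  have "r ` V = (\<Union>i < k. Vs ! (k - Suc i))"
    by (simp add: V_eq image_UN glued_component_image)
  also have "\<dots> = (\<Union>i < k. rev Vs ! i)"
    by (simp add: rev_nth)
  also have "\<dots> = V"
    using UN_nth_eq_Union_set[of "rev Vs"] UN_nth_eq_Union_set[of Vs] V_eq by simp
  finally show ?thesis .
qed

lemma glued_inj_on: "inj_on r V"
  using glued_image finite_V by (simp add: finite_surj_inj)

lemma glued_edge_iff:
  assumes "x \<in> V" "y \<in> V"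
  shows "{x, y} \<in> E \<longleftrightarrow> {r x, r y} \<in> E"
proof
  assume "{x, y} \<in> E"
  then obtain m where m: "m < k" "{x, y} \<in> Es ! m" "x \<in> Vs ! m" "y \<in> Vs ! m"
    by (rule edge_component)
  then have "{(rs ! m) x, (rs ! m) y} \<in> Es ! (k - Suc m)"
    using reversal_family_nth(1)[OF m(1)] unfolding graph_iso_def by blast
  then show "{r x, r y} \<in> E"
    using component_subset(2)[of "k - Suc m"] glue m k_pos by auto
next
  assume "{r x, r y} \<in> E"
  then obtain m where m: "m < k" "{r x, r y} \<in> Es ! m" "r x \<in> Vs ! m" "r y \<in> Vs ! m"
    by (rule edge_component)
  define i where "i = k - Suc m"
  have i: "i < k" "k - Suc i = m"
    using m(1) unfolding i_def by auto
  have "x \<in> Vs ! i" "y \<in> Vs ! i"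
    using m(3,4) glued_component_image[OF i(1)] inj_onD[OF glued_inj_on] component_subset(1)[OF i(1)]
      assms i(2)
    by (metis (no_types, lifting) imageE subsetD)+
  moreover from this have "{(rs ! i) x, (rs ! i) y} \<in> Es ! (k - Suc i)"
    using m(2) glue i by simp
  ultimately show "{x, y} \<in> E"
    using reversal_family_nth(1)[OF i(1)] component_subset(2)[OF i(1)]
    unfolding graph_iso_def by blast
qed

lemma glued_reversal_aut: "graph_aut V E r \<and> r s = t \<and> r t = s"
proof (intro conjI)
  show "graph_aut V E r"
    unfolding graph_aut_def graph_iso_def bij_betw_def
    using glued_inj_on glued_image outside glued_edge_iff by blast
  show "r s = t"
    using glue reversal_family_nth(2)[OF k_pos] component_wellformed(1)[OF k_pos]
      first_terminal last_terminal k_pos by auto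
  show "r t = s"
    using glue reversal_family_nth(3)[of "k - 1"] terminal_in_previous[of k]
      first_terminal last_terminal k_pos by auto
qed

end

end

lemma antimono_inj_on_atMost:
  fixes m :: "nat \<Rightarrow> nat"
  assumes inj: "inj_on m {..n}" and range: "\<And>i. i \<le> n \<Longrightarrow> m i \<le> n"
    and anti: "\<And>i j. i \<le> j \<Longrightarrow> j \<le> n \<Longrightarrow> m j \<le> m i" and "i \<le> n"
  shows "m i = n - i"
proof -
  have "card {i..n} \<le> card {..m i}"
    using anti by (intro card_inj_on_le[OF inj_on_subset[OF inj]]) auto
  moreover have "card {..i} \<le> card {m i..n}"
    using anti range \<open>i \<le> n\<close> by (intro card_inj_on_le[OF inj_on_subset[OF inj]]) auto
  ultimately show ?thesis
    by simp
qed

context serial_superedge_nonserial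
begin

context
  fixes f :: "'a \<Rightarrow> 'a"
  assumes f: "graph_aut V E f" "f s = t" "f t = s"
begin

lemma separates_swap_iff: "separates E (f v) (f a) (f b) \<longleftrightarrow> separates E v a b"
  using separates_graph_aut_iff[OF f(1) edge_subset_V] .

(* f permutes the terminals by separates_s_t_iff, and it reverses their order because
   ss ! i separates ss ! j from t exactly when j \<le> i. *)
lemma swap_terminal:
  assumes "j \<le> k"
  shows "f (ss ! j) = ss ! (k - j)"
proof -
  have "\<exists>i. i \<le> k \<and> f (ss ! j) = ss ! i" if "j \<le> k" for j
  proof -
    have "separates E (ss ! j) s t"
      using separates_s_t_iff that by blast
    then have "separates E (f (ss ! j)) s t"
      using separates_swap_iff[of "ss ! j" s t] f(2,3) path_avoiding_commute by metis
    then show ?thesis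
      using separates_s_t_iff by blast
  qed
  then obtain m where m: "\<And>j. j \<le> k \<Longrightarrow> m j \<le> k \<and> f (ss ! j) = ss ! m j"
    by metis
  have "inj_on m {..k}"
  proof (rule inj_onI)
    fix i j
    assume ij: "i \<in> {..k}" "j \<in> {..k}" "m i = m j"
    then have "f (ss ! i) = f (ss ! j)"
      using m by simp
    then have "ss ! i = ss ! j"
      by (rule injD[OF permutes_inj[OF graph_aut_permutes[OF f(1)]]])
    then show "i = j"
      using terminal_eq_iff ij by simp
  qed
  moreover have "m i \<le> m j" if "j \<le> i" "i \<le> k" for i j
  proof -
    have "separates E (ss ! i) (ss ! j) (ss ! k)"
      using separates_terminals_iff that by simp
    then have "separates E (ss ! m i) (ss ! m j) (ss ! 0)"
      using separates_swap_iff[of "ss ! i" "ss ! j" "ss ! k"] m that f(3)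
        first_terminal last_terminal by simp
    then have "separates E (ss ! m i) (ss ! 0) (ss ! m j)"
      by (simp add: path_avoiding_commute)
    then show ?thesis
      using separates_terminals_iff[of 0 "m j" "m i"] m that by simp
  qed
  ultimately show ?thesis
    using antimono_inj_on_atMost[of m k j] m assms by simp
qed

lemma swap_component:
  assumes i: "i < k" and x: "x \<in> Vs ! i"
  shows "f x \<in> Vs ! (k - Suc i)"
proof (rule separated_in_component)
  show "k - Suc i < k"
    using i by simp
  show "f x \<in> V"
    using x component_subset(1)[OF i] permutes_in_image[OF graph_aut_permutes[OF f(1)]] by blast
  have "f (ss ! i) = ss ! Suc (k - Suc i)" "f (ss ! Suc i) = ss ! (k - Suc i)"
    using swap_terminal[of i] swap_terminal[of "Suc i"] i by (simp_all add: Suc_diff_Suc)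
  moreover have "separates E (f (ss ! i)) (f s) (f x)" "separates E (f (ss ! Suc i)) (f t) (f x)"
    using component_separated[OF i x] by (simp_all add: separates_swap_iff)
  ultimately show "separates E (ss ! (k - Suc i)) s (f x)" "separates E (ss ! Suc (k - Suc i)) t (f x)"
    using f(2,3) by simp_all
qed

end

lemma swap_component_image:
  assumes f: "graph_aut V E f" "f s = t" "f t = s" and i: "i < k"
  shows "f ` (Vs ! i) = Vs ! (k - Suc i)"
proof
  show "f ` (Vs ! i) \<subseteq> Vs ! (k - Suc i)"
    using swap_component[OF f i] by blast
  have perm: "f permutes V"
    using graph_aut_permutes[OF f(1)] .
  have f_inv: "graph_aut V E (inv f)" "inv f s = t" "inv f t = s"
    using graph_aut_inv[OF f(1)] f(2,3) by (simp_all add: permutes_inv_eq[OF perm])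
  show "Vs ! (k - Suc i) \<subseteq> f ` (Vs ! i)"
  proof
    fix y
    assume "y \<in> Vs ! (k - Suc i)"
    then have "inv f y \<in> Vs ! i"
      using swap_component[OF f_inv, of "k - Suc i" y] i by simp
    then show "y \<in> f ` (Vs ! i)"
      using permutes_inverses(1)[OF perm, of y] by (metis image_eqI)
  qed
qed

lemma swap_reversal_family:
  assumes f: "graph_aut V E f" "f s = t" "f t = s"
  shows "reversal_family Vs Es ss (replicate k f)"
proof -
  have iso: "graph_iso (Vs ! i) (Es ! i) (Vs ! (k - Suc i)) (Es ! (k - Suc i)) f" if i: "i < k" for i
  proof -
    have "bij_betw f (Vs ! i) (Vs ! (k - Suc i))"
      using swap_component_image[OF f i] permutes_inj_on[OF graph_aut_permutes[OF f(1)]]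
      unfolding bij_betw_def by blast
    moreover have "{x, y} \<in> Es ! i \<longleftrightarrow> {f x, f y} \<in> Es ! (k - Suc i)"
      if "x \<in> Vs ! i" "y \<in> Vs ! i" for x y
    proof -
      have "{x, y} \<in> Es ! i \<longleftrightarrow> {x, y} \<in> E"
        by (rule edge_iff[OF i that])
      also have "\<dots> \<longleftrightarrow> {f x, f y} \<in> E"
        using graph_aut_edge[OF f(1)] that component_subset(1)[OF i] by blast
      also have "\<dots> \<longleftrightarrow> {f x, f y} \<in> Es ! (k - Suc i)"
        using edge_iff[of "k - Suc i" "f x" "f y"] swap_component[OF f i] that i by simp
      finally show ?thesis .
    qed
    ultimately show ?thesis
      unfolding graph_iso_def by blast
  qed
  show ?thesis
    unfolding reversal_family_def
    using iso swap_terminal[OF f] by (auto simp: Suc_diff_Suc)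
qed

end

theorem theorem6p4:
  fixes V :: "'a set" and E :: "'a set set" and s t :: 'a
    and Vs :: "'a set list" and Es :: "'a set set list" and ss :: "'a list"
  assumes decomp: "serial_decomp V E s t Vs Es ss"
    and nonserial: "\<forall>i < length Vs. \<not> is_serial (Vs ! i) (Es ! i) (ss ! i) (ss ! Suc i)"
  shows "(\<forall>rs r. reversal_family Vs Es ss rs
              \<and> (\<forall>i < length Vs. \<forall>x \<in> Vs ! i. r x = (rs ! i) x)
              \<and> (\<forall>x. x \<notin> V \<longrightarrow> r x = x)
            \<longrightarrow> Aut_semi V E s t = Aut_or V E s t \<union> (\<lambda>\<sigma>. r \<circ> \<sigma>) ` Aut_or V E s t)
       \<and> ((\<nexists>rs. reversal_family Vs Es ss rs) \<longrightarrow> Aut_semi V E s t = Aut_or V E s t)"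
proof -
  interpret serial_superedge_nonserial V E s t Vs Es ss
    using decomp nonserial by unfold_locales
  show ?thesis
  proof (intro conjI allI impI)
    fix rs r
    assume "reversal_family Vs Es ss rs \<and> (\<forall>i < k. \<forall>x \<in> Vs ! i. r x = (rs ! i) x)
      \<and> (\<forall>x. x \<notin> V \<longrightarrow> r x = x)"
    then have "graph_aut V E r" "r s = t" "r t = s"
      using glued_reversal_aut by blast+
    then show "Aut_semi V E s t = Aut_or V E s t \<union> (\<lambda>\<sigma>. r \<circ> \<sigma>) ` Aut_or V E s t"
      by (rule Aut_semi_eq_coset[OF s_neq_t])
  next
    assume "\<nexists>rs. reversal_family Vs Es ss rs"
    then show "Aut_semi V E s t = Aut_or V E s t"
      using Aut_semi_eq_Aut_or[OF s_neq_t] swap_reversal_family by blast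
  qed
qed

end
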